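(* Let $s$ be a scoring vector with all entries positive, and assume $m=dn$ with $d$ a positive integer. There exist a preference profile $P$ and a vector $k$ (namely $k_1=\cdots=k_n=d$) such that $$\frac{(n-1)\sum_{j=1}^{d}s_j+\sum_{j=d+1}^{2d}s_j}{\sum_{j=1}^m s_j}\le\mathcal{P}^u_{AtoP}\le\frac{n\sum_{j=1}^{d}s_j}{\sum_{j=1}^m s_j},$$ $$\frac{\sum_{j=d+1}^{2d}s_j}{\sum_{j=(n-1)d+1}^m s_j}\le\mathcal{P}^e_{AtoP}\le\frac{\sum_{j=1}^{d}s_j}{\sum_{j=(n-1)d+1}^m s_j},$$ $$\frac{\big(\sum_{j=1}^{d}s_j\big)^{n-1}\big(\sum_{j=d+1}^{2d}s_j\big)}{\prod_{i=1}^n\sum_{j=(i-1)d+1}^{id}s_j}\le\mathcal{P}^n_{AtoP}\le\frac{\big(\sum_{j=1}^{d}s_j\big)^{n}}{\prod_{i=1}^n\sum_{j=(i-1)d+1}^{id}s_j}.$$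
   Context: There are $n$ agents $a_1,\ldots,a_n$ and $m$ items. A preference profile $P=(\succ_{a_1},\ldots,\succ_{a_n})$ assigns to each agent a strict ranking of the items. A scoring vector $s=(s_1,\ldots,s_m)$ satisfies $s_1\ge\cdots\ge s_m$; an agent's value for her $j$-th preferred item is $s_j$, utilities are additive. Given $k=(k_1,\ldots,k_n)$ with non-negative integer entries summing to $m$, agent $a_1$ first picks $k_1$ items, then $a_2$ picks $k_2$ of the remaining ones, etc., each greedily picking her most preferred remaining items; $U^k_P(a)$ is the total score $a$ receives. $SW^u_P(k)=\sum_a U^k_P(a)$, $SW^e_P(k)=\min_a U^k_P(a)$, $SW^n_P(k)=\prod_a U^k_P(a)$. For a permutation $\pi$ of $[n]$, $P_\pi$ is the profile obtained from $P$ by permuting the agents' rankings according to $\pi$. The price of assignment of agents to positions is $\mathcal{P}^x_{AtoP}=\max_{\pi}SW^x_{P_\pi}(k)/\min_{\pi}SW^x_{P_\pi}(k)$ for $x\in\{u,e,n\}$, with $\pi$ ranging over all permutations of $[n]$. *)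

theory Defs
  imports Complex_Main "HOL-Combinatorics.Permutations"
begin

(* Agents are 0..n-1 (agent a_{i+1} is index i), items are 0..m-1.
   A profile P maps each agent i to her ranking, a list of the items from most
   to least preferred.  A scoring vector is s :: nat => real, indexed 1..m. *)

definition is_profile :: "nat \<Rightarrow> nat \<Rightarrow> (nat \<Rightarrow> nat list) \<Rightarrow> bool" where
  "is_profile n m P \<longleftrightarrow> (\<forall>i<n. distinct (P i) \<and> set (P i) = {..<m})"

definition is_scoring_vector :: "nat \<Rightarrow> (nat \<Rightarrow> real) \<Rightarrow> bool" where
  "is_scoring_vector m s \<longleftrightarrow> (\<forall>j. 1 \<le> j \<and> j < m \<longrightarrow> s (Suc j) \<le> s j)"

fun taken :: "(nat \<Rightarrow> nat list) \<Rightarrow> (nat \<Rightarrow> nat) \<Rightarrow> nat \<Rightarrow> nat set" where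
  "taken P k 0 = {}"
| "taken P k (Suc i) = taken P k i \<union> set (take (k i) (filter (\<lambda>x. x \<notin> taken P k i) (P i)))"

definition bundle_of :: "(nat \<Rightarrow> nat list) \<Rightarrow> (nat \<Rightarrow> nat) \<Rightarrow> nat \<Rightarrow> nat set" where
  "bundle_of P k i = set (take (k i) (filter (\<lambda>x. x \<notin> taken P k i) (P i)))"

(* U^k_P(a_i): sum of s_j over positions j (1-based) in her ranking of picked items *)
definition utility :: "(nat \<Rightarrow> real) \<Rightarrow> (nat \<Rightarrow> nat list) \<Rightarrow> (nat \<Rightarrow> nat) \<Rightarrow> nat \<Rightarrow> real" where
  "utility s P k i = (\<Sum>j\<in>{j. j < length (P i) \<and> P i ! j \<in> bundle_of P k i}. s (Suc j))"

definition SW_u :: "nat \<Rightarrow> (nat \<Rightarrow> real) \<Rightarrow> (nat \<Rightarrow> nat list) \<Rightarrow> (nat \<Rightarrow> nat) \<Rightarrow> real" where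
  "SW_u n s P k = (\<Sum>i<n. utility s P k i)"

definition SW_e :: "nat \<Rightarrow> (nat \<Rightarrow> real) \<Rightarrow> (nat \<Rightarrow> nat list) \<Rightarrow> (nat \<Rightarrow> nat) \<Rightarrow> real" where
  "SW_e n s P k = Min ((\<lambda>i. utility s P k i) ` {..<n})"

definition SW_n :: "nat \<Rightarrow> (nat \<Rightarrow> real) \<Rightarrow> (nat \<Rightarrow> nat list) \<Rightarrow> (nat \<Rightarrow> nat) \<Rightarrow> real" where
  "SW_n n s P k = (\<Prod>i<n. utility s P k i)"

(* price of assignment of agents to positions for welfare function SW;
   P_pi assigns to agent i the ranking P (pi i) *)
definition price_AtoP ::
  "(nat \<Rightarrow> (nat \<Rightarrow> real) \<Rightarrow> (nat \<Rightarrow> nat list) \<Rightarrow> (nat \<Rightarrow> nat) \<Rightarrow> real)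
   \<Rightarrow> nat \<Rightarrow> (nat \<Rightarrow> real) \<Rightarrow> (nat \<Rightarrow> nat list) \<Rightarrow> (nat \<Rightarrow> nat) \<Rightarrow> real" where
  "price_AtoP SW n s P k =
     Max {SW n s (P \<circ> \<pi>) k | \<pi>. \<pi> permutes {..<n}} /
     Min {SW n s (P \<circ> \<pi>) k | \<pi>. \<pi> permutes {..<n}}"

end

theory Submission
  imports Defs
begin

text \<open>
  Cut the positions \<open>1, \<dots>, m\<close> of a ranking into \<open>n\<close> blocks of \<open>d\<close> consecutive positions and
  let \<open>b\<^sub>p\<close> be the total score of block \<open>p\<close> (\<open>p = 0, \<dots>, n - 1\<close>). With \<open>k = (d, \<dots>, d)\<close> the
  agent in place \<open>p\<close> picks her \<open>d\<close> best items among those left after \<open>p d\<close> items are gone, so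
  in every profile her utility lies between \<open>b\<^sub>p\<close> and \<open>b\<^sub>0\<close>; this bounds every welfare value and
  gives the upper bounds on the price. For the lower bounds let every agent rank the items block
  by block: \<open>a\<^sub>1\<close> ranks the blocks \<open>1, n, 2, \<dots>, n - 1\<close> and \<open>a\<^sub>i\<close> (\<open>i \<ge> 2\<close>) the blocks
  \<open>i - 1, 1, \<dots>, i - 2, i, \<dots>, n\<close>. In the given order \<open>a\<^sub>i\<close> receives block \<open>i\<close>, her \<open>i\<close>-th
  choice, so every utility is as small as possible; in the order \<open>a\<^sub>2, \<dots>, a\<^sub>n, a\<^sub>1\<close> the first
  \<open>n - 1\<close> agents receive their top block and \<open>a\<^sub>1\<close> her second one.
\<close>

lemma scoring_vector_antimono:
  assumes "is_scoring_vector m s" "a \<le> b" "b < m"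
  shows "s (Suc b) \<le> s (Suc a)"
  using assms(2,3)
proof (induction b rule: dec_induct)
  case (step b)
  then have "s (Suc (Suc b)) \<le> s (Suc b)"
    using assms(1) unfolding is_scoring_vector_def by auto
  then show ?case using step by simp
qed simp

definition block_score :: "(nat \<Rightarrow> real) \<Rightarrow> nat \<Rightarrow> nat \<Rightarrow> real" where
  "block_score s d p = (\<Sum>r<d. s (Suc (p * d + r)))"

lemma block_end_le:
  fixes p n d :: nat
  assumes "p < n"
  shows "p * d + d \<le> d * n"
proof -
  have "Suc p * d \<le> n * d" using assms by (intro mult_le_mono1) simp
  then show ?thesis by (simp add: mult.commute)
qed

lemma block_score_eq_sum_atLeastAtMost:
  "block_score s d p = (\<Sum>j = p * d + 1..Suc p * d. s j)"
proof -
  have shift: "(\<Sum>j = a + 1..a + e. s j) = (\<Sum>r<e. s (Suc (a + r)))" for a e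
    by (induction e) simp_all
  have "Suc p * d = p * d + d" by simp
  then show ?thesis by (simp only: block_score_def shift)
qed

lemma block_score_eq_sum_atLeastLessThan:
  "block_score s d p = (\<Sum>j\<in>{p * d..<p * d + d}. s (Suc j))"
proof -
  have "(\<Sum>j\<in>{a..<a + e}. s (Suc j)) = (\<Sum>r<e. s (Suc (a + r)))" for a e
    by (induction e) simp_all
  then show ?thesis by (simp only: block_score_def)
qed

lemma sum_block_scores: "(\<Sum>p<n. block_score s d p) = (\<Sum>j = 1..n * d. s j)"
proof -
  have "(\<Sum>p<n. block_score s d p) = (\<Sum>p<n. \<Sum>r\<in>{p * d..<p * d + d}. s (Suc r))"
    unfolding block_score_eq_sum_atLeastLessThan ..
  also have "\<dots> = (\<Sum>r<n * d. s (Suc r))" by (rule sum.nat_group)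
  also have "\<dots> = (\<Sum>j = 1..n * d. s j)"
    by (simp add: sum.atLeast1_atMost_eq)
  finally show ?thesis .
qed

lemma prod_block_scores:
  "(\<Prod>i = 1..n. \<Sum>j = (i - 1) * d + 1..i * d. s j) = (\<Prod>p<n. block_score s d p)"
  by (simp add: prod.atLeast1_atMost_eq block_score_eq_sum_atLeastAtMost)

lemma block_score_pos:
  assumes "\<forall>j\<in>{1..d * n}. s j > 0" "0 < d" "p < n"
  shows "0 < block_score s d p"
  unfolding block_score_def
proof (rule sum_pos)
  fix r assume "r \<in> {..<d}"
  then have "p * d + r < d * n" using block_end_le[OF assms(3), of d] by simp
  then show "0 < s (Suc (p * d + r))" using assms(1) by auto
qed (use assms(2) in auto)

lemma block_score_antimono:
  assumes "is_scoring_vector (d * n) s" "p \<le> q" "q < n"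
  shows "block_score s d q \<le> block_score s d p"
  unfolding block_score_def
proof (rule sum_mono)
  fix r assume "r \<in> {..<d}"
  then have "q * d + r < d * n" using block_end_le[OF assms(3), of d] by simp
  moreover have "p * d + r \<le> q * d + r" using assms(2) by simp
  ultimately show "s (Suc (q * d + r)) \<le> s (Suc (p * d + r))"
    using scoring_vector_antimono[OF assms(1)] by blast
qed

section \<open>Bounds on the utility in any profile\<close>

lemma take_filter_closed_under_earlier:
  assumes "distinct L" "j < j'" "j' < length L" "p (L ! j)"
    and "L ! j' \<in> set (take d (filter p L))"
  shows "L ! j \<in> set (take d (filter p L))"
  using assms
proof (induction L arbitrary: j j' d)
  case (Cons a L)
  show ?case
  proof (cases j)
    case 0
    then show ?thesis using Cons.prems by (cases d) auto
  next
    case (Suc i)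
    then obtain i' where j': "j' = Suc i'" using Cons.prems(2) by (cases j') auto
    have "L ! i' \<noteq> a" using Cons.prems(1,3) j' by auto
    show ?thesis
    proof (cases "p a")
      case True
      then obtain e where "d = Suc e" using Cons.prems(5) by (cases d) auto
      then show ?thesis
        using Cons.IH[of i i' e] Cons.prems Suc j' True \<open>L ! i' \<noteq> a\<close> by auto
    next
      case False
      then show ?thesis using Cons.IH[of i i' d] Cons.prems Suc j' by auto
    qed
  qed
qed simp

lemma sum_le_sum_initial_segment:
  fixes f :: "nat \<Rightarrow> real"
  assumes "J \<subseteq> {..<m}" "card J = d" and antimono: "\<And>a b. a \<le> b \<Longrightarrow> b < m \<Longrightarrow> f b \<le> f a"
  shows "sum f J \<le> (\<Sum>r<d. f r)"
  using assms(1,2)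
proof (induction d arbitrary: J)
  case (Suc d)
  have fin: "finite J" using Suc.prems(1) finite_subset by blast
  define jm where "jm = Max J"
  have jm: "jm \<in> J" using Suc.prems(2) fin Max_in jm_def by fastforce
  have below: "J - {jm} \<subseteq> {..<jm}" using Max_ge[OF fin] jm_def by fastforce
  have card: "card (J - {jm}) = d" using Suc.prems(2) jm by simp
  have "d \<le> jm" using card_mono[OF _ below] card by simp
  then have "f jm \<le> f d" using antimono jm Suc.prems(1) by auto
  moreover have "J - {jm} \<subseteq> {..<m}" using Suc.prems(1) by blast
  then have "sum f (J - {jm}) \<le> (\<Sum>r<d. f r)" using Suc.IH card by blast
  ultimately show ?case using jm fin by (simp add: sum.remove)
next
  case 0
  then have "J = {}" by (meson card_eq_0_iff finite_lessThan finite_subset)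
  then show ?case by simp
qed

text \<open>\<open>t\<close> bounds the number of gaps below each element of \<open>J\<close>, so the \<open>i\<close>-th smallest
  element of \<open>J\<close> is at most \<open>i + t\<close>.\<close>
lemma sum_ge_sum_shifted_segment:
  fixes f :: "nat \<Rightarrow> real"
  assumes "finite J" "card J = d" "\<forall>j\<in>J. card {j'. j' < j \<and> j' \<notin> J} \<le> t" "d + t \<le> m"
    and antimono: "\<And>a b. a \<le> b \<Longrightarrow> b < m \<Longrightarrow> f b \<le> f a"
  shows "(\<Sum>r<d. f (t + r)) \<le> sum f J"
  using assms(1-4)
proof (induction d arbitrary: J)
  case (Suc d)
  define jm where "jm = Max J"
  have jm: "jm \<in> J" using Suc.prems(1,2) Max_in jm_def by fastforce
  define J' where "J' = J - {jm}"
  have below: "J' \<subseteq> {..<jm}" using Max_ge[OF Suc.prems(1)] jm_def J'_def by fastforce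
  have card: "card J' = d" using Suc.prems(2) jm J'_def by simp
  have "\<forall>j\<in>J'. card {j'. j' < j \<and> j' \<notin> J'} \<le> t"
  proof
    fix j assume j: "j \<in> J'"
    then have "{j'. j' < j \<and> j' \<notin> J'} = {j'. j' < j \<and> j' \<notin> J}" using below J'_def by auto
    then show "card {j'. j' < j \<and> j' \<notin> J'} \<le> t" using Suc.prems(3) j J'_def by auto
  qed
  then have IH: "(\<Sum>r<d. f (t + r)) \<le> sum f J'" using Suc.IH card Suc.prems J'_def by auto
  have gaps: "finite {j'. j' < jm \<and> j' \<notin> J}" by (rule finite_subset[of _ "{..<jm}"]) auto
  have "jm = card {..<jm}" by simp
  also have "\<dots> \<le> card (J' \<union> {j'. j' < jm \<and> j' \<notin> J})"
    by (rule card_mono) (use gaps Suc.prems(1) J'_def in auto)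
  also have "\<dots> \<le> card J' + card {j'. j' < jm \<and> j' \<notin> J}" by (rule card_Un_le)
  finally have "jm \<le> t + d" using card Suc.prems(3) jm by fastforce
  then have "f (t + d) \<le> f jm" using Suc.prems(4) antimono by auto
  then show ?case using IH jm Suc.prems(1) J'_def by (simp add: sum.remove)
qed simp

lemma card_take_filter_not_in:
  assumes "distinct L" "set L = {..<m}" "T \<subseteq> {..<m}" "card T + d \<le> m"
  shows "card (set (take d (filter (\<lambda>x. x \<notin> T) L))) = d"
proof -
  let ?F = "filter (\<lambda>x. x \<notin> T) L"
  have "set ?F = {..<m} - T" using assms(2) by auto
  then have "length ?F = card ({..<m} - T)" using distinct_card[of ?F] assms(1) by simp
  also have "\<dots> = m - card T" using assms(3) by (simp add: card_Diff_subset finite_subset)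
  finally show ?thesis using assms(1,4) by (simp add: distinct_card)
qed

lemma taken_card:
  assumes "is_profile n (d * n) Q" "p \<le> n"
  shows "taken Q (\<lambda>_. d) p \<subseteq> {..<d * n} \<and> card (taken Q (\<lambda>_. d) p) = p * d"
  using assms(2)
proof (induction p)
  case (Suc p)
  let ?T = "taken Q (\<lambda>_. d) p"
  let ?B = "set (take d (filter (\<lambda>x. x \<notin> ?T) (Q p)))"
  have T: "?T \<subseteq> {..<d * n}" "card ?T = p * d" using Suc by auto
  have L: "distinct (Q p)" "set (Q p) = {..<d * n}"
    using assms(1) Suc.prems unfolding is_profile_def by auto
  have "card ?T + d \<le> d * n" using T block_end_le[of p n d] Suc.prems by simp
  then have "card ?B = d" using card_take_filter_not_in[OF L T(1)] by blast
  moreover have "?B \<subseteq> {..<d * n} - ?T" using L(2) set_take_subset by fastforce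
  moreover have "finite ?T" using T(1) finite_subset by blast
  ultimately have "card (?T \<union> ?B) = p * d + d" using T(2) by (subst card_Un_disjoint) auto
  then show ?case using T(1) \<open>?B \<subseteq> {..<d * n} - ?T\<close> by auto
qed simp

lemma card_positions:
  assumes "distinct L" "A \<subseteq> set L"
  shows "card {j. j < length L \<and> L ! j \<in> A} = card A"
proof -
  have "bij_betw (nth L) {j. j < length L \<and> L ! j \<in> A} A"
    unfolding bij_betw_def
  proof
    show "inj_on (nth L) {j. j < length L \<and> L ! j \<in> A}"
      using assms(1) by (auto simp: inj_on_def nth_eq_iff_index_eq)
    have "A \<subseteq> nth L ` {j. j < length L \<and> L ! j \<in> A}"
    proof
      fix x assume "x \<in> A"
      then obtain j where "j < length L" "L ! j = x" using assms(2) by (metis in_set_conv_nth subsetD)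
      then show "x \<in> nth L ` {j. j < length L \<and> L ! j \<in> A}" using \<open>x \<in> A\<close> by auto
    qed
    then show "nth L ` {j. j < length L \<and> L ! j \<in> A} = A" by auto
  qed
  then show ?thesis by (rule bij_betw_same_card)
qed

lemma utility_between_block_scores:
  assumes prof: "is_profile n (d * n) Q" and sv: "is_scoring_vector (d * n) s" and "p < n"
  shows "block_score s d p \<le> utility s Q (\<lambda>_. d) p \<and> utility s Q (\<lambda>_. d) p \<le> block_score s d 0"
proof -
  let ?T = "taken Q (\<lambda>_. d) p" and ?L = "Q p" and ?B = "bundle_of Q (\<lambda>_. d) p"
  define J where "J = {j. j < length ?L \<and> ?L ! j \<in> ?B}"
  define TJ where "TJ = {j. j < length ?L \<and> ?L ! j \<in> ?T}"
  have T: "?T \<subseteq> {..<d * n}" "card ?T = p * d" using taken_card[OF prof] \<open>p < n\<close> by auto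
  have L: "distinct ?L" "set ?L = {..<d * n}" using prof \<open>p < n\<close> unfolding is_profile_def by auto
  have len: "length ?L = d * n" using distinct_card[OF L(1)] L(2) by simp
  have room: "p * d + d \<le> d * n" using block_end_le[OF \<open>p < n\<close>] .
  have B: "?B = set (take d (filter (\<lambda>x. x \<notin> ?T) ?L))" unfolding bundle_of_def ..
  have "card ?B = d" using card_take_filter_not_in[OF L T(1)] room T(2) B by simp
  moreover have "?B \<subseteq> set ?L" using B set_take_subset by fastforce
  ultimately have cardJ: "card J = d" using card_positions[OF L(1)] J_def by simp
  have J: "J \<subseteq> {..<d * n}" "finite J" using len J_def by (auto intro: finite_subset)
  have antimono: "\<And>a b. a \<le> b \<Longrightarrow> b < d * n \<Longrightarrow> s (Suc b) \<le> s (Suc a)"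
    using scoring_vector_antimono[OF sv] by blast
  have utility: "utility s Q (\<lambda>_. d) p = (\<Sum>j\<in>J. s (Suc j))" unfolding utility_def J_def ..
  have "card TJ = p * d" using card_positions[OF L(1)] T L(2) TJ_def by simp
  \<comment> \<open>an unpicked position before a picked one holds an item that was taken earlier\<close>
  have "card {j'. j' < j \<and> j' \<notin> J} \<le> p * d" if "j \<in> J" for j
  proof -
    have "{j'. j' < j \<and> j' \<notin> J} \<subseteq> TJ"
      using that take_filter_closed_under_earlier[OF L(1), of _ j "\<lambda>x. x \<notin> ?T" d]
      unfolding J_def TJ_def B by auto
    then show ?thesis using \<open>card TJ = p * d\<close> card_mono[of TJ] TJ_def by fastforce
  qed
  then have "(\<Sum>r<d. s (Suc (p * d + r))) \<le> (\<Sum>j\<in>J. s (Suc j))"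
    using sum_ge_sum_shifted_segment[where f = "\<lambda>j. s (Suc j)" and t = "p * d" and m = "d * n",
        OF J(2) cardJ _ _ antimono] room by (simp add: add.commute)
  moreover have "(\<Sum>j\<in>J. s (Suc j)) \<le> (\<Sum>r<d. s (Suc r))"
    using sum_le_sum_initial_segment[OF J(1) cardJ antimono] .
  ultimately show ?thesis unfolding utility block_score_def by simp
qed

section \<open>Profiles that rank the items block by block\<close>

lemma div_eq_iff_in_block:
  fixes x d p :: nat
  assumes "0 < d"
  shows "x div d = p \<longleftrightarrow> x \<in> {p * d..<p * d + d}"
proof
  assume "x div d = p"
  then show "x \<in> {p * d..<p * d + d}"
    using div_times_less_eq_dividend[of x d] dividend_less_div_times[OF assms, of x] by auto
next
  assume "x \<in> {p * d..<p * d + d}"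
  then show "x div d = p" by (intro div_nat_eqI) (auto simp: mult.commute)
qed

definition block_item :: "(nat \<Rightarrow> nat) \<Rightarrow> nat \<Rightarrow> nat \<Rightarrow> nat" where
  "block_item \<sigma> d j = \<sigma> (j div d) * d + j mod d"

text \<open>The ranking that lists the blocks \<open>\<sigma> 0, \<sigma> 1, \<dots>\<close>, each in increasing order.\<close>
definition block_ranking :: "nat \<Rightarrow> nat \<Rightarrow> (nat \<Rightarrow> nat) \<Rightarrow> nat list" where
  "block_ranking n d \<sigma> = map (block_item \<sigma> d) [0..<d * n]"

lemma block_item_div: "0 < d \<Longrightarrow> block_item \<sigma> d j div d = \<sigma> (j div d)"
  by (simp add: block_item_def)

lemma block_item_mod: "0 < d \<Longrightarrow> block_item \<sigma> d j mod d = j mod d"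
  by (simp add: block_item_def)

lemma block_item_in_block_iff:
  "0 < d \<Longrightarrow> block_item \<sigma> d j \<in> {p * d..<p * d + d} \<longleftrightarrow> \<sigma> (j div d) = p"
  using div_eq_iff_in_block[of d "block_item \<sigma> d j" p] by (simp add: block_item_div)

lemma block_ranking_is_ranking:
  assumes "0 < d" "bij_betw \<sigma> {..<n} {..<n}"
  shows "distinct (block_ranking n d \<sigma>) \<and> set (block_ranking n d \<sigma>) = {..<d * n}"
proof -
  let ?f = "block_item \<sigma> d"
  have inj_\<sigma>: "inj_on \<sigma> {..<n}" using bij_betw_imp_inj_on[OF assms(2)] .
  have maps_\<sigma>: "\<sigma> ` {..<n} \<subseteq> {..<n}" using bij_betw_imp_surj_on[OF assms(2)] by simp
  have below: "j < d * n \<longleftrightarrow> j div d < n" for j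
    using assms(1) by (simp add: div_less_iff_less_mult mult.commute)
  have maps: "?f ` {..<d * n} \<subseteq> {..<d * n}"
    using assms(1) maps_\<sigma> by (auto simp: below block_item_div image_subset_iff)
  have inj: "inj_on ?f {..<d * n}"
  proof (rule inj_onI)
    fix a b assume "a \<in> {..<d * n}" "b \<in> {..<d * n}" "?f a = ?f b"
    then have "a div d = b div d"
      using block_item_div[OF assms(1)] inj_onD[OF inj_\<sigma>] below by (metis lessThan_iff)
    moreover have "a mod d = b mod d" using block_item_mod[OF assms(1)] \<open>?f a = ?f b\<close> by metis
    ultimately show "a = b" by (metis div_mult_mod_eq)
  qed
  show ?thesis using inj endo_inj_surj[OF _ maps inj]
    by (simp add: block_ranking_def distinct_map atLeast0LessThan)
qed

lemma block_item_image_block: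
  assumes d: "0 < d"
  shows "block_item \<sigma> d ` {c * d..<c * d + d} = {\<sigma> c * d..<\<sigma> c * d + d}"
proof
  show "block_item \<sigma> d ` {c * d..<c * d + d} \<subseteq> {\<sigma> c * d..<\<sigma> c * d + d}"
  proof
    fix x assume "x \<in> block_item \<sigma> d ` {c * d..<c * d + d}"
    then obtain j where "j div d = c" "x = block_item \<sigma> d j"
      using div_eq_iff_in_block[OF d] by blast
    then show "x \<in> {\<sigma> c * d..<\<sigma> c * d + d}" using block_item_in_block_iff[OF d] by simp
  qed
  show "{\<sigma> c * d..<\<sigma> c * d + d} \<subseteq> block_item \<sigma> d ` {c * d..<c * d + d}"
  proof
    fix x assume "x \<in> {\<sigma> c * d..<\<sigma> c * d + d}"
    then have "x div d = \<sigma> c" using div_eq_iff_in_block[OF d] by simp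
    then have "block_item \<sigma> d (c * d + x mod d) = x"
      using d div_mult_mod_eq[of x d] by (simp add: block_item_def)
    moreover have "c * d + x mod d \<in> {c * d..<c * d + d}" using d by simp
    ultimately show "x \<in> block_item \<sigma> d ` {c * d..<c * d + d}" by (metis image_eqI)
  qed
qed

text \<open>If block \<open>\<sigma> c = p\<close> is the first block whose items are not among the first \<open>p d\<close>, it
  is what an agent with this ranking picks after the blocks \<open>0, \<dots>, p - 1\<close> are gone.\<close>
lemma take_filter_block_ranking:
  assumes d: "0 < d" and "c < n" "\<sigma> c = p" and earlier: "\<forall>c'<c. \<sigma> c' < p"
  shows "set (take d (filter (\<lambda>x. x \<notin> {..<p * d}) (block_ranking n d \<sigma>))) = {p * d..<p * d + d}"
proof -
  let ?f = "block_item \<sigma> d" and ?keep = "\<lambda>x. x \<notin> {..<p * d}"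
  have split_upt: "[i..<k] = [i..<j] @ [j..<k]" if "i \<le> j" "j \<le> k" for i j k :: nat
    using upt_add_eq_append[OF that(1), of "k - j"] that(2) by simp
  have room: "c * d + d \<le> d * n" using block_end_le[OF \<open>c < n\<close>] .
  have "[0..<d * n] = [0..<c * d] @ [c * d..<d * n]" by (rule split_upt) (use room in linarith)+
  also have "[c * d..<d * n] = [c * d..<c * d + d] @ [c * d + d..<d * n]"
    by (rule split_upt) (use room in simp_all)
  finally have split: "[0..<d * n] = [0..<c * d] @ [c * d..<c * d + d] @ [c * d + d..<d * n]" .
  have "?f j < p * d" if "j < c * d" for j
  proof -
    have "\<sigma> (j div d) < p" using that earlier d by (simp add: div_less_iff_less_mult)
    then have "Suc (\<sigma> (j div d)) * d \<le> p * d" by (intro mult_le_mono1) simp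
    moreover have "j mod d < d" using d by simp
    ultimately show ?thesis unfolding block_item_def by simp
  qed
  then have before: "filter ?keep (map ?f [0..<c * d]) = []" by (simp add: filter_empty_conv)
  have block: "?f ` {c * d..<c * d + d} = {p * d..<p * d + d}"
    using block_item_image_block[OF d] \<open>\<sigma> c = p\<close> by blast
  then have within: "filter ?keep (map ?f [c * d..<c * d + d]) = map ?f [c * d..<c * d + d]"
    by (intro filter_True) auto
  have "take d (filter ?keep (block_ranking n d \<sigma>)) = map ?f [c * d..<c * d + d]"
    unfolding block_ranking_def split map_append filter_append before within by simp
  then show ?thesis using block by simp
qed

lemma positions_in_block_ranking:
  assumes d: "0 < d" and "inj_on \<sigma> {..<n}" "c < n" "\<sigma> c = p"
  shows "{j. j < length (block_ranking n d \<sigma>) \<and> block_ranking n d \<sigma> ! j \<in> {p * d..<p * d + d}}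
      = {c * d..<c * d + d}"
proof (rule set_eqI)
  fix j
  show "j \<in> {j. j < length (block_ranking n d \<sigma>) \<and> block_ranking n d \<sigma> ! j \<in> {p * d..<p * d + d}}
      \<longleftrightarrow> j \<in> {c * d..<c * d + d}"
  proof (cases "j < d * n")
    case True
    then have "j div d < n" using d by (simp add: div_less_iff_less_mult mult.commute)
    then have "\<sigma> (j div d) = p \<longleftrightarrow> j div d = c" using assms(2-4) by (auto dest: inj_onD)
    then show ?thesis
      using True block_item_in_block_iff[OF d] div_eq_iff_in_block[OF d] by (simp add: block_ranking_def)
  next
    case False
    then show ?thesis using block_end_le[OF \<open>c < n\<close>, of d] by (auto simp: block_ranking_def)
  qed
qed

lemma utility_block_rankings:
  assumes d: "0 < d"
    and ranking: "\<And>p. p < n \<Longrightarrow> Q p = block_ranking n d (\<sigma> p)"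
    and inj: "\<And>p. p < n \<Longrightarrow> inj_on (\<sigma> p) {..<n}"
    and first_free: "\<And>p. p < n \<Longrightarrow> c p < n \<and> \<sigma> p (c p) = p \<and> (\<forall>c'<c p. \<sigma> p c' < p)"
    and "p < n"
  shows "utility s Q (\<lambda>_. d) p = block_score s d (c p)"
proof -
  have picks: "set (take d (filter (\<lambda>x. x \<notin> {..<q * d}) (Q q))) = {q * d..<q * d + d}"
    if "q < n" for q
    using take_filter_block_ranking[OF d, of "c q" n "\<sigma> q" q] first_free[OF that] ranking[OF that]
    by simp
  have taken: "taken Q (\<lambda>_. d) q = {..<q * d}" if "q \<le> n" for q
    using that
  proof (induction q)
    case (Suc q)
    then have "taken Q (\<lambda>_. d) (Suc q) = {..<q * d} \<union> {q * d..<q * d + d}"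
      using picks[of q] by simp
    also have "\<dots> = {..<Suc q * d}" by auto
    finally show ?case .
  qed simp
  have picked: "bundle_of Q (\<lambda>_. d) p = {p * d..<p * d + d}"
    using picks[OF \<open>p < n\<close>] taken[of p] \<open>p < n\<close> by (simp add: bundle_of_def)
  have "{j. j < length (Q p) \<and> Q p ! j \<in> {p * d..<p * d + d}} = {c p * d..<c p * d + d}"
    using positions_in_block_ranking[OF d inj[OF \<open>p < n\<close>]] first_free[OF \<open>p < n\<close>]
      ranking[OF \<open>p < n\<close>] by simp
  then show ?thesis unfolding utility_def picked block_score_eq_sum_atLeastLessThan by simp
qed

section \<open>The extremal profile\<close>

text \<open>The block that agent \<open>i\<close> ranks in place \<open>c\<close> (all counted from \<open>0\<close>).\<close>
definition example_order :: "nat \<Rightarrow> nat \<Rightarrow> nat \<Rightarrow> nat" where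
  "example_order n i c =
     (if i = 0 then (if c = 0 then 0 else if c = 1 then n - 1 else c - 1)
      else if c = 0 then i - 1 else if c < i then c - 1 else c)"

definition example_profile :: "nat \<Rightarrow> nat \<Rightarrow> nat \<Rightarrow> nat list" where
  "example_profile n d i = block_ranking n d (example_order n i)"

definition rotate_agents :: "nat \<Rightarrow> nat \<Rightarrow> nat" where
  "rotate_agents n p = (if p < n - 1 then p + 1 else if p = n - 1 then 0 else p)"

lemma example_order_bij:
  assumes "2 \<le> n" "i < n"
  shows "bij_betw (example_order n i) {..<n} {..<n}"
proof -
  have inj: "inj_on (example_order n i) {..<n}"
    using assms by (auto simp: inj_on_def example_order_def split: if_splits)
  have "example_order n i ` {..<n} \<subseteq> {..<n}" using assms by (auto simp: example_order_def)
  then show ?thesis using endo_inj_surj[OF finite_lessThan _ inj] inj by (simp add: bij_betw_def)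
qed

lemma is_profile_example_profile:
  assumes "0 < d" "2 \<le> n"
  shows "is_profile n (d * n) (example_profile n d)"
  unfolding is_profile_def example_profile_def
  using block_ranking_is_ranking[OF assms(1)] example_order_bij[OF assms(2)] by blast

lemma rotate_agents_permutes:
  assumes "2 \<le> n"
  shows "rotate_agents n permutes {..<n}"
proof (rule bij_imp_permutes)
  have inj: "inj_on (rotate_agents n) {..<n}"
    using assms by (auto simp: inj_on_def rotate_agents_def split: if_splits)
  have "rotate_agents n ` {..<n} \<subseteq> {..<n}" using assms by (auto simp: rotate_agents_def)
  then show "bij_betw (rotate_agents n) {..<n} {..<n}"
    using endo_inj_surj[OF finite_lessThan _ inj] inj by (simp add: bij_betw_def)
qed (auto simp: rotate_agents_def)

lemma utility_example_profile:
  assumes "0 < d" "2 \<le> n" "p < n"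
  shows "utility s (example_profile n d) (\<lambda>_. d) p = block_score s d p"
proof -
  have "example_order n q q = q \<and> (\<forall>c'<q. example_order n q c' < q)" for q
    by (auto simp: example_order_def)
  then show ?thesis
    using utility_block_rankings[where \<sigma> = "example_order n" and c = "\<lambda>q. q", OF assms(1)]
      bij_betw_imp_inj_on[OF example_order_bij[OF assms(2)]] assms(3) by (simp add: example_profile_def)
qed

lemma utility_example_profile_rotated:
  assumes "0 < d" "2 \<le> n" "p < n"
  shows "utility s (example_profile n d \<circ> rotate_agents n) (\<lambda>_. d) p
      = block_score s d (if p < n - 1 then 0 else 1)"
proof -
  let ?\<sigma> = "\<lambda>q. example_order n (rotate_agents n q)" and ?c = "\<lambda>q. if q < n - 1 then 0 else 1"
  have inj: "inj_on (?\<sigma> q) {..<n}" if "q < n" for q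
    using that bij_betw_imp_inj_on[OF example_order_bij[OF assms(2)]] by (auto simp: rotate_agents_def)
  have "?c q < n \<and> ?\<sigma> q (?c q) = q \<and> (\<forall>c'<?c q. ?\<sigma> q c' < q)" if "q < n" for q
    using that assms(2) by (cases "q < n - 1") (auto simp: example_order_def rotate_agents_def)
  then show ?thesis
    using utility_block_rankings[where \<sigma> = ?\<sigma> and c = ?c, OF assms(1) _ inj] assms(3)
    by (simp add: example_profile_def)
qed

section \<open>Bounds on the price\<close>

lemma is_profile_comp_permutes:
  assumes "is_profile n m P" "\<pi> permutes {..<n}"
  shows "is_profile n m (P \<circ> \<pi>)"
  using assms permutes_in_image[OF assms(2)] unfolding is_profile_def by auto

lemma price_AtoP_bounds:
  fixes SW :: "nat \<Rightarrow> (nat \<Rightarrow> real) \<Rightarrow> (nat \<Rightarrow> nat list) \<Rightarrow> (nat \<Rightarrow> nat) \<Rightarrow> real"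
  assumes "\<pi>\<^sub>1 permutes {..<n}" "\<pi>\<^sub>2 permutes {..<n}"
    and "A \<le> SW n s (P \<circ> \<pi>\<^sub>1) k" "SW n s (P \<circ> \<pi>\<^sub>2) k \<le> B"
    and bounds: "\<And>\<pi>. \<pi> permutes {..<n} \<Longrightarrow> Lo \<le> SW n s (P \<circ> \<pi>) k \<and> SW n s (P \<circ> \<pi>) k \<le> Hi"
    and "0 < Lo"
  shows "A / B \<le> price_AtoP SW n s P k \<and> price_AtoP SW n s P k \<le> Hi / Lo"
proof -
  let ?S = "{SW n s (P \<circ> \<pi>) k | \<pi>. \<pi> permutes {..<n}}"
  have "?S = (\<lambda>\<pi>. SW n s (P \<circ> \<pi>) k) ` {\<pi>. \<pi> permutes {..<n}}" by blast
  then have fin: "finite ?S" by (simp add: finite_permutations)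
  have ne: "?S \<noteq> {}" using assms(1) by blast
  have "SW n s (P \<circ> \<pi>\<^sub>1) k \<le> Max ?S" using fin assms(1) by (intro Max_ge) blast+
  moreover have "Min ?S \<le> SW n s (P \<circ> \<pi>\<^sub>2) k" using fin assms(2) by (intro Min_le) blast+
  moreover have "Lo \<le> Min ?S" "Max ?S \<le> Hi" using fin ne bounds by auto
  moreover have "Min ?S \<le> SW n s (P \<circ> \<pi>\<^sub>1) k" using fin assms(1) by (intro Min_le) blast+
  ultimately have "A / B \<le> Max ?S / Min ?S" "Max ?S / Min ?S \<le> Hi / Lo"
    using assms(3,4,6) by (auto intro!: frac_le)
  then show ?thesis unfolding price_AtoP_def by simp
qed

locale extremal_assignments =
  fixes n :: nat and s :: "nat \<Rightarrow> real" and P :: "nat \<Rightarrow> nat list" and k :: "nat \<Rightarrow> nat"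
    and b :: "nat \<Rightarrow> real" and \<sigma> :: "nat \<Rightarrow> nat"
  assumes two_agents: "2 \<le> n"
    and b_pos: "\<And>p. p < n \<Longrightarrow> 0 < b p"
    and b_antimono: "\<And>p q. p \<le> q \<Longrightarrow> q < n \<Longrightarrow> b q \<le> b p"
    and utility_bounds: "\<And>\<pi> p. \<pi> permutes {..<n} \<Longrightarrow> p < n \<Longrightarrow>
      b p \<le> utility s (P \<circ> \<pi>) k p \<and> utility s (P \<circ> \<pi>) k p \<le> b 0"
    and utility_identity: "\<And>p. p < n \<Longrightarrow> utility s P k p = b p"
    and \<sigma>_permutes: "\<sigma> permutes {..<n}"
    and utility_\<sigma>: "\<And>p. p < n \<Longrightarrow> utility s (P \<circ> \<sigma>) k p = (if p < n - 1 then b 0 else b 1)"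
begin

lemma lessThan_eq_insert_last: "{..<n} = insert (n - 1) {..<n - 1}"
  using two_agents by auto

lemma price_SW_u_bounds:
  "(real (n - 1) * b 0 + b 1) / (\<Sum>p<n. b p) \<le> price_AtoP SW_u n s P k \<and>
   price_AtoP SW_u n s P k \<le> real n * b 0 / (\<Sum>p<n. b p)"
proof (rule price_AtoP_bounds[OF \<sigma>_permutes permutes_id])
  have "SW_u n s (P \<circ> \<sigma>) k = b 1 + (\<Sum>p<n - 1. b 0)"
    unfolding SW_u_def lessThan_eq_insert_last using two_agents by (simp add: utility_\<sigma>)
  then show "real (n - 1) * b 0 + b 1 \<le> SW_u n s (P \<circ> \<sigma>) k" by simp
  show "SW_u n s (P \<circ> id) k \<le> (\<Sum>p<n. b p)" by (simp add: SW_u_def utility_identity)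
  show "(\<Sum>p<n. b p) \<le> SW_u n s (P \<circ> \<pi>) k \<and> SW_u n s (P \<circ> \<pi>) k \<le> real n * b 0"
    if "\<pi> permutes {..<n}" for \<pi>
    using sum_mono[of "{..<n}" b] sum_mono[of "{..<n}" _ "\<lambda>_. b 0"] utility_bounds[OF that]
    unfolding SW_u_def by auto
  show "0 < (\<Sum>p<n. b p)" using b_pos two_agents by (intro sum_pos) (auto simp: lessThan_empty_iff)
qed

lemma price_SW_e_bounds:
  "b 1 / b (n - 1) \<le> price_AtoP SW_e n s P k \<and> price_AtoP SW_e n s P k \<le> b 0 / b (n - 1)"
proof (rule price_AtoP_bounds[OF \<sigma>_permutes permutes_id])
  have nonempty: "{..<n} \<noteq> {}" using two_agents by (simp add: lessThan_empty_iff)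
  have "b 1 \<le> b 0" using b_antimono two_agents by simp
  then have "\<forall>p<n. b 1 \<le> utility s (P \<circ> \<sigma>) k p" by (simp add: utility_\<sigma>)
  then show "b 1 \<le> SW_e n s (P \<circ> \<sigma>) k" unfolding SW_e_def using nonempty by (simp add: Min_ge_iff)
  have "SW_e n s (P \<circ> id) k \<le> utility s P k (n - 1)"
    unfolding SW_e_def using two_agents by (intro Min_le) auto
  then show "SW_e n s (P \<circ> id) k \<le> b (n - 1)" using utility_identity[of "n - 1"] two_agents by simp
  show "b (n - 1) \<le> SW_e n s (P \<circ> \<pi>) k \<and> SW_e n s (P \<circ> \<pi>) k \<le> b 0"
    if "\<pi> permutes {..<n}" for \<pi>
  proof
    have "b (n - 1) \<le> utility s (P \<circ> \<pi>) k p" if "p < n" for p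
    proof -
      have "b (n - 1) \<le> b p" using b_antimono[of p "n - 1"] that by simp
      then show ?thesis using utility_bounds[OF \<open>\<pi> permutes {..<n}\<close> that] by linarith
    qed
    then show "b (n - 1) \<le> SW_e n s (P \<circ> \<pi>) k" unfolding SW_e_def using nonempty by (simp add: Min_ge_iff)
    have "SW_e n s (P \<circ> \<pi>) k \<le> utility s (P \<circ> \<pi>) k 0"
      unfolding SW_e_def using two_agents by (intro Min_le) auto
    then show "SW_e n s (P \<circ> \<pi>) k \<le> b 0" using utility_bounds[OF that, of 0] two_agents by simp
  qed
  show "0 < b (n - 1)" using b_pos two_agents by simp
qed

lemma price_SW_n_bounds:
  "b 0 ^ (n - 1) * b 1 / (\<Prod>p<n. b p) \<le> price_AtoP SW_n n s P k \<and>
   price_AtoP SW_n n s P k \<le> b 0 ^ n / (\<Prod>p<n. b p)"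
proof (rule price_AtoP_bounds[OF \<sigma>_permutes permutes_id])
  have "SW_n n s (P \<circ> \<sigma>) k = b 1 * (\<Prod>p<n - 1. b 0)"
    unfolding SW_n_def lessThan_eq_insert_last using two_agents by (simp add: utility_\<sigma>)
  then show "b 0 ^ (n - 1) * b 1 \<le> SW_n n s (P \<circ> \<sigma>) k" by simp
  show "SW_n n s (P \<circ> id) k \<le> (\<Prod>p<n. b p)" by (simp add: SW_n_def utility_identity)
  show "(\<Prod>p<n. b p) \<le> SW_n n s (P \<circ> \<pi>) k \<and> SW_n n s (P \<circ> \<pi>) k \<le> b 0 ^ n"
    if "\<pi> permutes {..<n}" for \<pi>
  proof
    show "(\<Prod>p<n. b p) \<le> SW_n n s (P \<circ> \<pi>) k"
      unfolding SW_n_def using utility_bounds[OF that] b_pos by (intro prod_mono) (auto intro: less_imp_le)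
    have "SW_n n s (P \<circ> \<pi>) k \<le> (\<Prod>p<n. b 0)"
      unfolding SW_n_def using utility_bounds[OF that] b_pos
      by (intro prod_mono) (fastforce intro: less_imp_le order_trans)
    then show "SW_n n s (P \<circ> \<pi>) k \<le> b 0 ^ n" by simp
  qed
  show "0 < (\<Prod>p<n. b p)" using b_pos by (intro prod_pos) auto
qed

end

lemma extremal_assignments_example_profile:
  assumes "2 \<le> n" "0 < d" and sv: "is_scoring_vector (d * n) s" and pos: "\<forall>j\<in>{1..d * n}. s j > 0"
  shows "extremal_assignments n s (example_profile n d) (\<lambda>_. d) (block_score s d) (rotate_agents n)"
proof
  let ?P = "example_profile n d" and ?b = "block_score s d"
  have prof: "is_profile n (d * n) ?P" using is_profile_example_profile[OF assms(2,1)] .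
  show "2 \<le> n" by (rule assms(1))
  show "0 < ?b p" if "p < n" for p using block_score_pos[OF pos assms(2) that] .
  show "?b q \<le> ?b p" if "p \<le> q" "q < n" for p q using block_score_antimono[OF sv that] .
  show "?b p \<le> utility s (?P \<circ> \<pi>) (\<lambda>_. d) p \<and> utility s (?P \<circ> \<pi>) (\<lambda>_. d) p \<le> ?b 0"
    if "\<pi> permutes {..<n}" "p < n" for \<pi> p
    using utility_between_block_scores[OF is_profile_comp_permutes[OF prof that(1)] sv that(2)] .
  show "utility s ?P (\<lambda>_. d) p = ?b p" if "p < n" for p
    using utility_example_profile[OF assms(2,1) that] .
  show "rotate_agents n permutes {..<n}" using rotate_agents_permutes[OF assms(1)] .
  show "utility s (?P \<circ> rotate_agents n) (\<lambda>_. d) p = (if p < n - 1 then ?b 0 else ?b 1)"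
    if "p < n" for p
    using utility_example_profile_rotated[OF assms(2,1) that] by simp
qed

theorem proposition3:
  fixes n m d :: nat and s :: "nat \<Rightarrow> real"
  assumes "n \<ge> 2" and "d \<ge> 1" and "m = d * n"
    and "is_scoring_vector m s" and "\<forall>j\<in>{1..m}. s j > 0"
  shows "\<exists>P k. is_profile n m P \<and> (\<forall>i<n. k i = d) \<and>
    ((real (n - 1) * (\<Sum>j=1..d. s j) + (\<Sum>j=d+1..2*d. s j)) / (\<Sum>j=1..m. s j)
        \<le> price_AtoP SW_u n s P k \<and>
     price_AtoP SW_u n s P k \<le> (real n * (\<Sum>j=1..d. s j)) / (\<Sum>j=1..m. s j)) \<and>
    ((\<Sum>j=d+1..2*d. s j) / (\<Sum>j=(n-1)*d+1..m. s j) \<le> price_AtoP SW_e n s P k \<and>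
     price_AtoP SW_e n s P k \<le> (\<Sum>j=1..d. s j) / (\<Sum>j=(n-1)*d+1..m. s j)) \<and>
    ((\<Sum>j=1..d. s j) ^ (n - 1) * (\<Sum>j=d+1..2*d. s j)
        / (\<Prod>i=1..n. \<Sum>j=(i-1)*d+1..i*d. s j) \<le> price_AtoP SW_n n s P k \<and>
     price_AtoP SW_n n s P k \<le> (\<Sum>j=1..d. s j) ^ n / (\<Prod>i=1..n. \<Sum>j=(i-1)*d+1..i*d. s j))"
proof -
  let ?P = "example_profile n d" and ?b = "block_score s d"
  have d: "0 < d" using assms(2) by simp
  have sv: "is_scoring_vector (d * n) s" and pos: "\<forall>j\<in>{1..d * n}. s j > 0"
    using assms(3-5) by simp_all
  interpret extremal_assignments n s ?P "\<lambda>_. d" ?b "rotate_agents n"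
    using extremal_assignments_example_profile[OF assms(1) d sv pos] .
  have "Suc (n - 1) * d = m" using assms(1,3) by simp
  then have sums: "(\<Sum>j=1..d. s j) = ?b 0" "(\<Sum>j=d+1..2*d. s j) = ?b 1"
    "(\<Sum>j=(n-1)*d+1..m. s j) = ?b (n - 1)" "(\<Sum>j=1..m. s j) = (\<Sum>p<n. ?b p)"
    using sum_block_scores[where n = n and s = s and d = d] assms(3)
    by (simp_all add: block_score_eq_sum_atLeastAtMost numeral_2_eq_2 mult.commute)
  have "is_profile n m ?P" using is_profile_example_profile[OF d assms(1)] assms(3) by simp
  then show ?thesis
    unfolding sums prod_block_scores using price_SW_u_bounds price_SW_e_bounds price_SW_n_bounds
    by (intro exI[of _ ?P] exI[of _ "\<lambda>_. d"]) blast
qed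

end
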